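(* Let $A\in\mathbb{R}^{n\times n}$, $B\in\mathbb{R}^{n\times m}$, $C\in\mathbb{R}^{p\times n}$ and let $\mathscr{G}$ be a weighted directed graph on $N$ nodes with Laplacian $\mathcal{L}$, and consider the dynamic network $(A,B,C,\mathscr{G})$ described in the context. Let $L_{G}=+\infty$, $L_{K}=+\infty$ and $\varrho=1$. Suppose that for any given positive constants $C_{x}$, $C_{\hat{x}}$, $C_{\hat{u}}$ there exist a communication protocol $H(\gamma,\alpha,\alpha_{u},L,L_{u},G)\in\mathscr{H}(\varrho,L_{G})$ and a control protocol $U(K)\in\mathscr{U}(L_{K})$ such that for any initial conditions with $\|X(0)\|_\infty<C_{x}$, $\|\hat{X}(0)\|_\infty<C_{\hat{x}}$ and $\|\hat{U}(0)\|_\infty<C_{\hat{u}}$, the closed-loop network achieves inter-agent state observation under $H$ and $U$, i.e. $\lim_{t\to\infty}(x_j(t)-\hat x_j(t))=0$ for all $j=1,\dots,N$. Then $(A,C)$ is detectable.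
   Context: Agents $i=1,\dots,N$ have dynamics $x_i(t+1)=Ax_i(t)+Bu_i(t)$, $y_i(t)=Cx_i(t)$, $t=0,1,\dots$. The communication graph $\mathscr{G}$ has node set $\{1,\dots,N\}$ and weighted adjacency matrix $\mathscr{A}=[a_{ij}]$ with $a_{ii}=0$, $a_{ij}\ge0$, and $a_{ij}>0$ iff there is a channel from $j$ to $i$; $N_i=\{j: a_{ij}>0\}$. The Laplacian is $\mathcal{L}=\mathrm{diag}(\sum_j a_{1j},\dots,\sum_j a_{Nj})-\mathscr{A}$. Norms: for a vector, $\|\cdot\|_\infty$ is the max norm; for a matrix, $\|\cdot\|$ is the spectral (Euclidean operator) norm. Quantizer: for $p\in(0,1]$ and a positive integer $M$, $Q_{p,M}(y)=ip$ if $ip-p/2\le y<ip+p/2$, $i=0,1,\dots,M-1$; $Q_{p,M}(y)=Mp$ if $y\ge Mp-p/2$; $Q_{p,M}(y)=-Q_{p,M}(-y)$ if $y<-p/2$; applied componentwise to vectors. Communication protocol set: for $\varrho\in(0,1]$ and $L_G\in\mathbb{R}^+\cup\{+\infty\}$, $\mathscr{H}(\varrho,L_G)$ consists of protocols $H(\gamma,\alpha,\alpha_u,L,L_u,G)$ with $\gamma\in(0,\varrho)$, $\alpha,\alpha_u\in(0,1]$, positive integers $L,L_u$, and $G\in\mathbb{R}^{n\times p}$ with $\|G\|<L_G$. Under such a protocol, each agent $j$ runs the encoder: $\hat x_j(0)=\hat x_{j0}$, $\hat u_j(0)=\hat u_{j0}$, and for $t\ge1$: $s_j(t)=Q_{\alpha,L}\big((y_j(t-1)-C\hat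 x_j(t-1))/\gamma^{t-1}\big)$, $\hat x_j(t)=A\hat x_j(t-1)+\gamma^{t-1}Gs_j(t)+B\hat u_j(t-1)$, $s_{u,j}(t)=Q_{\alpha_u,L_u}\big((u_j(t)-\hat u_j(t-1))/\gamma^{t-1}\big)$, $\hat u_j(t)=\hat u_j(t-1)+\gamma^{t-1}s_{u,j}(t)$; the symbols $s_j(t),s_{u,j}(t)$ are sent over each channel $(j,i)$, and receiver $i$ runs the decoder $\hat x_{ji}(0)=\hat x_{j0}$, $\hat u_{ji}(0)=\hat u_{j0}$, $\hat x_{ji}(t)=A\hat x_{ji}(t-1)+\gamma^{t-1}Gs_j(t)+B\hat u_{ji}(t-1)$, $\hat u_{ji}(t)=\hat u_{ji}(t-1)+\gamma^{t-1}s_{u,j}(t)$ (so $\hat x_{ji}(t)=\hat x_j(t)$). Control protocol set: for $L_K\in\mathbb{R}^+\cup\{+\infty\}$, $\mathscr{U}(L_K)$ consists of protocols $U(K)$, $K\in\mathbb{R}^{m\times n}$ with $\|K\|<L_K$, given by $u_i(t)=K\sum_{j\in N_i}a_{ij}(\hat x_{ji}(t)-\hat x_i(t))$, $t\ge0$. Stacked vectors: $X(t)=(x_1^T(t),\dots,x_N^T(t))^T$, $\hat X(t)=(\hat x_1^T(t),\dots,\hat x_N^T(t))^T$, $\hat U(t)=(\hat u_1^T(t),\dots,\hat u_N^T(t))^T$. *)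

theory Defs
  imports "HOL-Analysis.Analysis"
begin

text \<open>Scalar quantizer Q_{p,M}. For 0 <= ... the branch i p with
 i p - p/2 <= y < i p + p/2, i = 0..M-1, is i = floor (y/p + 1/2).\<close>
definition quant_nonneg :: "real \<Rightarrow> nat \<Rightarrow> real \<Rightarrow> real" where
  "quant_nonneg q M y =
     (if y \<ge> real M * q - q / 2 then real M * q
      else real_of_int \<lfloor>y / q + 1 / 2\<rfloor> * q)"

definition quant :: "real \<Rightarrow> nat \<Rightarrow> real \<Rightarrow> real" where
  "quant q M y = (if y < - q / 2 then - quant_nonneg q M (- y) else quant_nonneg q M y)"

definition vquant :: "real \<Rightarrow> nat \<Rightarrow> real ^ 'k \<Rightarrow> real ^ 'k" where
  "vquant q M v = (\<chi> k. quant q M (v $ k))"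

definition cmat :: "real ^ 'n ^ 'n \<Rightarrow> complex ^ 'n ^ 'n" where
  "cmat M = (\<chi> i j. complex_of_real (M $ i $ j))"

definition schur_stable :: "real ^ 'n ^ 'n \<Rightarrow> bool" where
  "schur_stable M \<longleftrightarrow>
     (\<forall>(lam::complex) (v::complex ^ 'n). v \<noteq> 0 \<and> cmat M *v v = (\<chi> k. lam * v $ k)
        \<longrightarrow> cmod lam < 1)"

definition detectable :: "real ^ 'n ^ 'n \<Rightarrow> real ^ 'n ^ 'p \<Rightarrow> bool" where
  "detectable A C \<longleftrightarrow> (\<exists>L :: real ^ 'p ^ 'n. schur_stable (A + L ** C))"

text \<open>Agents are indexed by the finite type 'i, adjacency a.
 x, u : states/inputs; xh, uh : encoder states (decoder states coincide: xh_ji = xh_j);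
 s, su : transmitted symbols.\<close>
definition closed_loop ::
  "real ^ 'n ^ 'n \<Rightarrow> real ^ 'm ^ 'n \<Rightarrow> real ^ 'n ^ 'p \<Rightarrow> ('i::finite \<Rightarrow> 'i \<Rightarrow> real) \<Rightarrow>
   real \<Rightarrow> real \<Rightarrow> real \<Rightarrow> nat \<Rightarrow> nat \<Rightarrow> real ^ 'p ^ 'n \<Rightarrow> real ^ 'n ^ 'm \<Rightarrow>
   (nat \<Rightarrow> 'i \<Rightarrow> real ^ 'n) \<Rightarrow> (nat \<Rightarrow> 'i \<Rightarrow> real ^ 'm) \<Rightarrow>
   (nat \<Rightarrow> 'i \<Rightarrow> real ^ 'n) \<Rightarrow> (nat \<Rightarrow> 'i \<Rightarrow> real ^ 'm) \<Rightarrow>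
   (nat \<Rightarrow> 'i \<Rightarrow> real ^ 'p) \<Rightarrow> (nat \<Rightarrow> 'i \<Rightarrow> real ^ 'm) \<Rightarrow> bool" where
  "closed_loop A B C a \<gamma> \<alpha> \<alpha>u L Lu G K x u xh uh s su \<longleftrightarrow>
     (\<forall>t i. x (Suc t) i = A *v x t i + B *v u t i) \<and>
     (\<forall>t i. u t i = K *v (\<Sum>j\<in>{j. a i j > 0}. a i j *\<^sub>R (xh t j - xh t i))) \<and>
     (\<forall>t i. t \<ge> 1 \<longrightarrow>
        s t i = vquant \<alpha> L ((1 / \<gamma> ^ (t - 1)) *\<^sub>R (C *v x (t - 1) i - C *v xh (t - 1) i)) \<and>
        xh t i = A *v xh (t - 1) i + \<gamma> ^ (t - 1) *\<^sub>R (G *v s t i) + B *v uh (t - 1) i \<and>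
        su t i = vquant \<alpha>u Lu ((1 / \<gamma> ^ (t - 1)) *\<^sub>R (u t i - uh (t - 1) i)) \<and>
        uh t i = uh (t - 1) i + \<gamma> ^ (t - 1) *\<^sub>R su t i)"

end

theory Submission imports Defs begin

text \<open>Suppose C A^t x0 = 0 for all t. Then the states A^t x0 together with zero estimates,
  inputs and transmitted symbols form a closed-loop trajectory (each quantizer maps 0 to 0), so
  state observation forces A^t x0 \<rightarrow> 0. This suffices for detectability: the subspaces
  R_0 = UNIV, R_(j+1) = A (R_j \<inter> ker C) decrease and are constant from j = n on, and their limit
  T is an A-invariant subspace of ker C. For a linear right inverse \<phi> of C mapping C(R_j) into
  R_j, the matrix M = A + L C with L = -A \<phi> sends x to A (x - \<phi> (C x)), hence R_j into R_(j+1).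
  So M^n x \<in> T, where M agrees with A; every orbit of M tends to 0 and M is Schur stable.\<close>

lemma linear_right_inverse_on_subspace:
  fixes f :: "'a::euclidean_space \<Rightarrow> 'b::euclidean_space"
  assumes f: "linear f" and S: "subspace S"
  obtains \<rho> where "linear \<rho>" "\<And>y. \<rho> y \<in> S" "\<And>y. y \<in> f ` S \<Longrightarrow> f (\<rho> y) = y"
proof -
  obtain Bs where Bs: "Bs \<subseteq> f ` S" "independent Bs" "f ` S \<subseteq> span Bs"
    by (rule basis_exists) blast
  obtain Bf where Bf: "Bs \<subseteq> Bf" "independent Bf" "UNIV \<subseteq> span Bf"
    by (rule maximal_independent_subset_extend[OF subset_UNIV Bs(2)]) simp
  have "\<forall>b\<in>Bs. \<exists>x\<in>S. f x = b" using Bs(1) by blast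
  then obtain pre where pre: "\<And>b. b \<in> Bs \<Longrightarrow> pre b \<in> S \<and> f (pre b) = b" by metis
  define h where "h b = (if b \<in> Bs then pre b else 0)" for b
  obtain g where g: "linear g" "\<forall>x\<in>Bf. g x = h x" "range g = span (h ` Bf)"
    using linear_independent_extend_subspace[OF Bf(2), of h] by blast
  have "h ` Bf \<subseteq> S" using pre S by (auto simp: h_def subspace_0)
  then have "range g \<subseteq> S" using S g(3) by (simp add: span_minimal)
  moreover have "f (g y) = y" if "y \<in> f ` S" for y
  proof -
    have "\<forall>x\<in>Bs. (f \<circ> g) x = id x" using g(2) Bf(1) pre by (auto simp: h_def)
    then have "(f \<circ> g) y = id y"
      using linear_eq_on_span[of "f \<circ> g" id Bs y] linear_compose[OF g(1) f] linear_id that Bs(3) by auto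
    then show ?thesis by simp
  qed
  ultimately show ?thesis using that g(1) by blast
qed

lemma linear_right_inverse_extend:
  fixes f :: "'a::euclidean_space \<Rightarrow> 'b::euclidean_space"
  assumes f: "linear f" and S: "subspace S" and T: "subspace T" "T \<subseteq> S"
    and \<phi>: "linear \<phi>" "\<And>y. y \<in> f ` T \<Longrightarrow> \<phi> y \<in> T" "\<And>y. y \<in> f ` T \<Longrightarrow> f (\<phi> y) = y"
  obtains \<psi> where "linear \<psi>" "\<And>y. y \<in> f ` S \<Longrightarrow> \<psi> y \<in> S"
    "\<And>y. y \<in> f ` T \<Longrightarrow> \<psi> y = \<phi> y" "\<And>y. y \<in> f ` S \<Longrightarrow> f (\<psi> y) = y"
proof -
  have fT: "subspace (f ` T)" and fS: "subspace (f ` S)"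
    using linear_subspace_image[OF f] S T by auto
  obtain \<rho> where \<rho>: "linear \<rho>" "\<And>y. \<rho> y \<in> S" "\<And>y. y \<in> f ` S \<Longrightarrow> f (\<rho> y) = y"
    using linear_right_inverse_on_subspace[OF f S] by blast
  \<comment> \<open>a linear projection onto f ` T\<close>
  obtain P where P: "linear P" "\<And>y. P y \<in> f ` T" "\<And>y. y \<in> f ` T \<Longrightarrow> P y = y"
    using linear_right_inverse_on_subspace[OF linear_id fT] by auto
  define \<psi> where "\<psi> y = \<phi> (P y) + \<rho> (y - P y)" for y
  have "linear \<psi>"
  proof (rule linearI)
    fix x y show "\<psi> (x + y) = \<psi> x + \<psi> y"
      by (simp add: \<psi>_def linear_add[OF P(1)] linear_add[OF \<phi>(1)] linear_diff[OF \<rho>(1)]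
          linear_add[OF \<rho>(1)] algebra_simps)
  next
    fix c x show "\<psi> (c *\<^sub>R x) = c *\<^sub>R \<psi> x"
      by (simp add: \<psi>_def linear_scale[OF P(1)] linear_scale[OF \<phi>(1)] linear_diff[OF \<rho>(1)]
          linear_scale[OF \<rho>(1)] algebra_simps)
  qed
  moreover have "\<psi> y \<in> S" for y
    using \<phi>(2)[OF P(2)] \<rho>(2) T(2) S unfolding \<psi>_def by (meson subsetD subspace_add)
  moreover have "\<psi> y = \<phi> y" if "y \<in> f ` T" for y
    using P(3)[OF that] by (simp add: \<psi>_def linear_0[OF \<rho>(1)])
  moreover have "f (\<psi> y) = y" if "y \<in> f ` S" for y
  proof -
    have "P y \<in> f ` S" using P(2) T(2) by blast
    then have "y - P y \<in> f ` S" using fS that by (simp add: subspace_diff)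
    then show ?thesis
      using \<rho>(3) \<phi>(3)[OF P(2)] by (simp add: \<psi>_def linear_add[OF f])
  qed
  ultimately show ?thesis using that by blast
qed

lemma linear_right_inverse_on_flag:
  fixes f :: "'a::euclidean_space \<Rightarrow> 'b::euclidean_space"
  assumes f: "linear f"
    and "\<And>j. subspace (R j)" "\<And>j. R (Suc j) \<subseteq> R j" "\<And>j. j \<ge> N \<Longrightarrow> R j = R N"
  shows "\<exists>\<phi>. linear \<phi> \<and> (\<forall>j y. y \<in> f ` R j \<longrightarrow> \<phi> y \<in> R j) \<and> (\<forall>y\<in>f ` R 0. f (\<phi> y) = y)"
  using assms(2-4)
proof (induction N arbitrary: R)
  case 0
  obtain \<rho> where "linear \<rho>" "\<And>y. \<rho> y \<in> R 0" "\<And>y. y \<in> f ` R 0 \<Longrightarrow> f (\<rho> y) = y"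
    using linear_right_inverse_on_subspace[OF f "0.prems"(1)] by blast
  with "0.prems"(3) show ?case by (metis le0)
next
  case (Suc N)
  obtain \<phi> where \<phi>: "linear \<phi>" "\<forall>j y. y \<in> f ` R (Suc j) \<longrightarrow> \<phi> y \<in> R (Suc j)"
    "\<forall>y\<in>f ` R (Suc 0). f (\<phi> y) = y"
    using Suc.IH[of "\<lambda>j. R (Suc j)"] Suc.prems by (metis Suc_le_mono)
  obtain \<psi> where \<psi>: "linear \<psi>" "\<And>y. y \<in> f ` R 0 \<Longrightarrow> \<psi> y \<in> R 0"
    "\<And>y. y \<in> f ` R 1 \<Longrightarrow> \<psi> y = \<phi> y" "\<And>y. y \<in> f ` R 0 \<Longrightarrow> f (\<psi> y) = y"
    using linear_right_inverse_extend[OF f, of "R 0" "R 1" \<phi>] Suc.prems \<phi> by auto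
  have "\<psi> y \<in> R j" if "y \<in> f ` R j" for j y
  proof (cases j)
    case (Suc k)
    have "R j \<subseteq> R 1"
      using Suc Suc.prems(2) by (induction k arbitrary: j) (auto intro: subset_trans)
    then have "\<psi> y = \<phi> y" using \<psi>(3) that by blast
    then show ?thesis using \<phi>(2) that Suc by simp
  qed (use that \<psi>(2) in simp)
  then show ?case using \<psi>(1,4) by blast
qed

lemma decreasing_subspace_chain_stalls:
  fixes R :: "nat \<Rightarrow> 'a::euclidean_space set"
  assumes sub: "\<And>j. subspace (R j)" and dec: "\<And>j. R (Suc j) \<subseteq> R j"
  shows "\<exists>k\<le>DIM('a). R (Suc k) = R k"
proof (rule ccontr)
  assume "\<not> ?thesis"
  then have "dim (R k) + k \<le> DIM('a)" if "k \<le> Suc DIM('a)" for k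
    using that
  proof (induction k)
    case 0 show ?case using dim_subset_UNIV by simp
  next
    case (Suc k)
    then have "R (Suc k) \<subset> R k" using dec[of k] by auto
    then have "dim (R (Suc k)) < dim (R k)"
      using sub by (metis dim_psubset span_eq_iff)
    then show ?case using Suc by simp
  qed
  from this[of "Suc DIM('a)"] show False by simp
qed

lemma subset_if_eq_linear_image_inter:
  fixes f :: "'a::euclidean_space \<Rightarrow> 'a"
  assumes f: "linear f" and T: "subspace T" and K: "subspace K" and eq: "T = f ` (T \<inter> K)"
  shows "T \<subseteq> K"
proof -
  have "dim T \<le> dim (T \<inter> K)" using dim_image_le[OF f, of "T \<inter> K"] eq by simp
  then have "T \<inter> K = T" using subspace_dim_equal[OF subspace_inter[OF T K] T] by blast
  then show ?thesis by blast
qed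

fun unobservable_flag :: "real^'n^'n \<Rightarrow> real^'n^'p \<Rightarrow> nat \<Rightarrow> (real^'n) set" where
  "unobservable_flag A C 0 = UNIV"
| "unobservable_flag A C (Suc j) = (\<lambda>x. A *v x) ` (unobservable_flag A C j \<inter> {x. C *v x = 0})"

lemma linear_matrix_vector_mult: "linear (\<lambda>x. (M::real^'a^'b) *v x)"
  using matrix_vector_mul_linear[of M] by simp

lemma subspace_unobservable_flag: "subspace (unobservable_flag A C j)"
proof (induction j)
  case (Suc j)
  have "subspace (unobservable_flag A C j \<inter> {x. C *v x = 0})"
    using Suc linear_subspace_kernel[OF linear_matrix_vector_mult[of C]] by (simp add: subspace_inter)
  then show ?case by (simp add: linear_subspace_image[OF linear_matrix_vector_mult])
qed simp

lemma unobservable_flag_Suc_subset: "unobservable_flag A C (Suc j) \<subseteq> unobservable_flag A C j"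
  by (induction j) (auto simp only: unobservable_flag.simps)

lemma unobservable_flag_eventually_const:
  fixes A :: "real^'n^'n" and C :: "real^'n^'p"
  assumes "j \<ge> CARD('n)"
  shows "unobservable_flag A C j = unobservable_flag A C CARD('n)"
proof -
  have "\<exists>k\<le>DIM(real^'n). unobservable_flag A C (Suc k) = unobservable_flag A C k"
    by (rule decreasing_subspace_chain_stalls[of "unobservable_flag A C", OF
          subspace_unobservable_flag unobservable_flag_Suc_subset])
  then obtain k where k: "k \<le> CARD('n)" "unobservable_flag A C (Suc k) = unobservable_flag A C k"
    by auto
  have stalled: "unobservable_flag A C (Suc i) = unobservable_flag A C i" if "i \<ge> k" for i
    using that
  proof (induction i rule: dec_induct)
    case base show ?case by (rule k(2))
  qed simp
  have "unobservable_flag A C i = unobservable_flag A C k" if "i \<ge> k" for i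
    using that by (induction i rule: dec_induct) (simp_all add: stalled del: unobservable_flag.simps)
  then show ?thesis using k(1) assms by (metis le_trans)
qed

lemma unobservable_flag_limit:
  fixes A :: "real^'n^'n" and C :: "real^'n^'p"
  defines "T \<equiv> unobservable_flag A C CARD('n)"
  shows "\<And>y. y \<in> T \<Longrightarrow> C *v y = 0" and "\<And>y. y \<in> T \<Longrightarrow> A *v y \<in> T"
proof -
  let ?K = "{x. C *v x = 0}"
  have T: "T = (\<lambda>x. A *v x) ` (T \<inter> ?K)"
    using unobservable_flag_eventually_const[of "Suc CARD('n)" A C] by (simp add: T_def)
  have "T \<subseteq> ?K"
    using subset_if_eq_linear_image_inter[OF linear_matrix_vector_mult _
        linear_subspace_kernel[OF linear_matrix_vector_mult[of C]] T]
      subspace_unobservable_flag unfolding T_def by blast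
  then show "\<And>y. y \<in> T \<Longrightarrow> C *v y = 0" by blast
  show "\<And>y. y \<in> T \<Longrightarrow> A *v y \<in> T" using T \<open>T \<subseteq> ?K\<close> by blast
qed

lemma output_injection_advances_unobservable_flag:
  fixes A :: "real^'n^'n" and C :: "real^'n^'p"
  obtains L :: "real^'p^'n" where
    "\<And>j x. x \<in> unobservable_flag A C j \<Longrightarrow> (A + L ** C) *v x \<in> unobservable_flag A C (Suc j)"
proof -
  obtain \<phi> where \<phi>: "linear \<phi>"
    "\<And>j y. y \<in> (\<lambda>x. C *v x) ` unobservable_flag A C j \<Longrightarrow> \<phi> y \<in> unobservable_flag A C j"
    "\<And>x. C *v \<phi> (C *v x) = C *v x"
    using linear_right_inverse_on_flag[of "\<lambda>x. C *v x" "unobservable_flag A C" "CARD('n)",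
        OF linear_matrix_vector_mult subspace_unobservable_flag unobservable_flag_Suc_subset
        unobservable_flag_eventually_const]
    by auto
  define L where "L = matrix (\<lambda>y. - (A *v \<phi> y))"
  have "linear (\<lambda>y. - (A *v \<phi> y))"
    using linear_compose_neg[OF linear_compose[OF \<phi>(1) linear_matrix_vector_mult[of A]]]
    by (simp add: o_def)
  then have Lx: "(A + L ** C) *v x = A *v (x - \<phi> (C *v x))" for x
    by (simp add: L_def matrix_vector_mult_add_rdistrib matrix_vector_mul_assoc[symmetric]
        matrix_vector_mult_diff_distrib)
  have "(A + L ** C) *v x \<in> unobservable_flag A C (Suc j)" if "x \<in> unobservable_flag A C j" for j x
  proof -
    have "x - \<phi> (C *v x) \<in> unobservable_flag A C j"
      using \<phi>(2) that subspace_unobservable_flag subspace_diff by blast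
    moreover have "C *v (x - \<phi> (C *v x)) = 0" using \<phi>(3) by (simp add: matrix_vector_mult_diff_distrib)
    ultimately show ?thesis by (simp add: Lx)
  qed
  then show ?thesis using that by blast
qed

lemma eigenvector_power_component:
  fixes M :: "real^'n^'n"
  assumes ev: "cmat M *v v = (\<chi> k. lam * v $ k)"
  shows "lam ^ k * v $ i =
    complex_of_real (((\<lambda>x. M *v x) ^^ k) (\<chi> j. Re (v $ j)) $ i) +
    \<i> * complex_of_real (((\<lambda>x. M *v x) ^^ k) (\<chi> j. Im (v $ j)) $ i)"
proof (induction k arbitrary: i)
  case 0
  show ?case by (simp add: complex_eq[symmetric])
next
  case (Suc k)
  let ?re = "((\<lambda>x. M *v x) ^^ k) (\<chi> j. Re (v $ j))"
  let ?im = "((\<lambda>x. M *v x) ^^ k) (\<chi> j. Im (v $ j))"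
  have "lam * v $ i = (\<Sum>j\<in>UNIV. complex_of_real (M $ i $ j) * v $ j)"
    using arg_cong[OF ev, of "\<lambda>w. w $ i"] by (simp add: cmat_def matrix_vector_mult_def)
  then have "lam ^ Suc k * v $ i = lam ^ k * (\<Sum>j\<in>UNIV. complex_of_real (M $ i $ j) * v $ j)"
    by simp
  also have "\<dots> = (\<Sum>j\<in>UNIV. complex_of_real (M $ i $ j) * (lam ^ k * v $ j))"
    by (simp add: sum_distrib_left mult.left_commute)
  also have "\<dots> = (\<Sum>j\<in>UNIV. complex_of_real (M $ i $ j) *
      (complex_of_real (?re $ j) + \<i> * complex_of_real (?im $ j)))"
    by (simp add: Suc.IH)
  also have "\<dots> = complex_of_real (\<Sum>j\<in>UNIV. M $ i $ j * ?re $ j) +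
      \<i> * complex_of_real (\<Sum>j\<in>UNIV. M $ i $ j * ?im $ j)"
    by (simp add: sum.distrib sum_distrib_left algebra_simps)
  finally show ?case by (simp add: matrix_vector_mult_def)
qed

lemma schur_stable_if_orbits_tend_to_zero:
  fixes M :: "real^'n^'n"
  assumes orbits: "\<And>x. (\<lambda>k. ((\<lambda>v. M *v v) ^^ k) x) \<longlonglongrightarrow> 0"
  shows "schur_stable M"
  unfolding schur_stable_def
proof (intro allI impI)
  fix lam :: complex and v :: "complex^'n"
  assume "v \<noteq> 0 \<and> cmat M *v v = (\<chi> k. lam * v $ k)"
  then obtain i where vi: "v $ i \<noteq> 0" and ev: "cmat M *v v = (\<chi> k. lam * v $ k)"
    by (metis vec_eq_iff zero_index)
  have "(\<lambda>k. complex_of_real (((\<lambda>x. M *v x) ^^ k) (\<chi> j. Re (v $ j)) $ i) +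
      \<i> * complex_of_real (((\<lambda>x. M *v x) ^^ k) (\<chi> j. Im (v $ j)) $ i)) \<longlonglongrightarrow> 0"
    using tendsto_add[OF tendsto_of_real tendsto_mult[OF tendsto_const tendsto_of_real]]
      tendsto_vec_nth[OF orbits] by fastforce
  then have "(\<lambda>k. lam ^ k * v $ i) \<longlonglongrightarrow> 0"
    by (simp add: eigenvector_power_component[OF ev])
  then have lim: "(\<lambda>k. cmod lam ^ k * cmod (v $ i)) \<longlonglongrightarrow> 0"
    using tendsto_norm by (fastforce simp: norm_mult norm_power)
  show "cmod lam < 1"
  proof (rule ccontr)
    assume "\<not> cmod lam < 1"
    then have "cmod (v $ i) \<le> cmod lam ^ k * cmod (v $ i)" for k
      by (simp add: mult_le_cancel_right1)
    then have "cmod (v $ i) \<le> 0" using LIMSEQ_le_const[OF lim] by blast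
    with vi show False by simp
  qed
qed

lemma detectable_if_unobservable_orbits_tend_to_zero:
  fixes A :: "real^'n^'n" and C :: "real^'n^'p"
  assumes unobs: "\<And>x. (\<And>k. C *v ((\<lambda>v. A *v v) ^^ k) x = 0) \<Longrightarrow>
    (\<lambda>k. ((\<lambda>v. A *v v) ^^ k) x) \<longlonglongrightarrow> 0"
  shows "detectable A C"
proof -
  let ?T = "unobservable_flag A C CARD('n)"
  obtain L :: "real^'p^'n" where L:
    "\<And>j x. x \<in> unobservable_flag A C j \<Longrightarrow> (A + L ** C) *v x \<in> unobservable_flag A C (Suc j)"
    using output_injection_advances_unobservable_flag[of A C] by blast
  define M where "M = A + L ** C"
  have flag: "((\<lambda>v. M *v v) ^^ k) x \<in> unobservable_flag A C k" for k x
  proof (induction k)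
    case (Suc k)
    show ?case using L[OF Suc.IH] by (simp add: M_def del: unobservable_flag.simps)
  qed simp
  have orbits: "(\<lambda>k. ((\<lambda>v. M *v v) ^^ k) x) \<longlonglongrightarrow> 0" for x
  proof -
    define y where "y = ((\<lambda>v. M *v v) ^^ CARD('n)) x"
    have orbit_in_T: "((\<lambda>v. A *v v) ^^ k) y \<in> ?T" for k
    proof (induction k)
      case 0
      show ?case using flag[of "CARD('n)"] by (simp add: y_def)
    qed (simp add: unobservable_flag_limit(2)[where A=A and C=C])
    \<comment> \<open>on ?T \<subseteq> ker C the matrices M and A agree\<close>
    have "((\<lambda>v. M *v v) ^^ (k + CARD('n))) x = ((\<lambda>v. A *v v) ^^ k) y" for k
    proof (induction k)
      case (Suc k)
      then show ?case
        using unobservable_flag_limit(1)[where A=A and C=C, OF orbit_in_T[of k]]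
        by (simp add: M_def matrix_vector_mult_add_rdistrib matrix_vector_mul_assoc[symmetric])
    qed (simp add: y_def)
    moreover have "(\<lambda>k. ((\<lambda>v. A *v v) ^^ k) y) \<longlonglongrightarrow> 0"
      using unobs unobservable_flag_limit(1)[where A=A and C=C, OF orbit_in_T] by blast
    ultimately show ?thesis
      using LIMSEQ_offset[of "\<lambda>k. ((\<lambda>v. M *v v) ^^ k) x" "CARD('n)"] by simp
  qed
  show ?thesis
    unfolding detectable_def using schur_stable_if_orbits_tend_to_zero[OF orbits] M_def by blast
qed

lemma vquant_zero:
  assumes "0 < q" "0 < M"
  shows "vquant q M 0 = 0"
proof -
  have "q \<le> real M * q" using assms by simp
  then have "quant q M 0 = 0" using assms by (simp add: quant_def quant_nonneg_def)
  then show ?thesis by (simp add: vquant_def vec_eq_iff)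
qed

lemma closed_loop_unobservable_orbit:
  assumes "0 < \<alpha>" "0 < L" "0 < \<alpha>u" "0 < Lu"
    and unobs: "\<And>k. C *v ((\<lambda>v. A *v v) ^^ k) x0 = 0"
  shows "closed_loop A B C a \<gamma> \<alpha> \<alpha>u L Lu G K (\<lambda>t i. ((\<lambda>v. A *v v) ^^ t) x0)
    (\<lambda>_ _. 0) (\<lambda>_ _. 0) (\<lambda>_ _. 0) (\<lambda>_ _. 0) (\<lambda>_ _. 0)"
  using assms by (simp add: closed_loop_def vquant_zero)

theorem theorem6:
  fixes A :: "real ^ 'n ^ 'n" and B :: "real ^ 'm ^ 'n" and C :: "real ^ 'n ^ 'p"
    and a :: "'i::finite \<Rightarrow> 'i \<Rightarrow> real"
  assumes adj_diag: "\<forall>i. a i i = 0"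
    and adj_nonneg: "\<forall>i j. a i j \<ge> 0"
    and hyp: "\<forall>Cx Cxh Cuh :: real. Cx > 0 \<and> Cxh > 0 \<and> Cuh > 0 \<longrightarrow>
      (\<exists>(\<gamma>::real) (\<alpha>::real) (\<alpha>u::real) (L::nat) (Lu::nat)
          (G :: real ^ 'p ^ 'n) (K :: real ^ 'n ^ 'm).
         0 < \<gamma> \<and> \<gamma> < 1 \<and> 0 < \<alpha> \<and> \<alpha> \<le> 1 \<and> 0 < \<alpha>u \<and> \<alpha>u \<le> 1 \<and>
         L > 0 \<and> Lu > 0 \<and>
         (\<forall>x u xh uh s su.
            closed_loop A B C a \<gamma> \<alpha> \<alpha>u L Lu G K x u xh uh s su \<and>
            (\<forall>i k. \<bar>x 0 i $ k\<bar> < Cx) \<and>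
            (\<forall>i k. \<bar>xh 0 i $ k\<bar> < Cxh) \<and>
            (\<forall>i k. \<bar>uh 0 i $ k\<bar> < Cuh)
            \<longrightarrow> (\<forall>j. (\<lambda>t. x t j - xh t j) \<longlonglongrightarrow> 0)))"
  shows "detectable A C"
proof (rule detectable_if_unobservable_orbits_tend_to_zero)
  fix x0 :: "real^'n"
  assume unobs: "\<And>k. C *v ((\<lambda>v. A *v v) ^^ k) x0 = 0"
  have pos: "0 < norm x0 + 1 \<and> 0 < (1::real) \<and> 0 < (1::real)" by (simp add: add_nonneg_pos)
  obtain \<gamma> \<alpha> \<alpha>u L Lu G K where par: "0 < \<alpha>" "0 < L" "0 < \<alpha>u" "0 < Lu"
    and observes: "\<forall>x u xh uh s su.
      closed_loop A B C a \<gamma> \<alpha> \<alpha>u L Lu G K x u xh uh s su \<and>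
      (\<forall>i k. \<bar>x 0 i $ k\<bar> < norm x0 + 1) \<and> (\<forall>i k. \<bar>xh 0 i $ k\<bar> < 1) \<and>
      (\<forall>i k. \<bar>uh 0 i $ k\<bar> < 1) \<longrightarrow> (\<forall>j. (\<lambda>t. x t j - xh t j) \<longlonglongrightarrow> 0)"
    using hyp[rule_format, OF pos] by (elim exE conjE) blast
  have "\<bar>x0 $ k\<bar> < norm x0 + 1" for k
    using component_le_norm_cart[of x0 k] by linarith
  then have "\<forall>j::'i. (\<lambda>t. ((\<lambda>v. A *v v) ^^ t) x0 - 0) \<longlonglongrightarrow> 0"
    using observes[rule_format, OF conjI[OF closed_loop_unobservable_orbit[OF par unobs]]] by simp
  then show "(\<lambda>k. ((\<lambda>v. A *v v) ^^ k) x0) \<longlonglongrightarrow> 0" by simp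
qed

end
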